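(* Let $(\Omega,\mathbb Z^N,\alpha)$ be a dynamical system and $\omega\in\Omega$. Then $L(\omega)=\bigcup_{\eta\in S^{N-1}}L^\eta(\omega)$.
   Context: A dynamical system $(\Omega,\mathbb Z^N,\alpha)$: $\Omega$ compact metric space, $\alpha$ maps $\mathbb Z^N$ to homeomorphisms of $\Omega$ with $\alpha(g+h)=\alpha(g)\circ\alpha(h)$. $g_n\to\infty$ means $(g_n)$ eventually leaves every finite subset of $\mathbb Z^N$. $L(\omega)=\{\nu\in\Omega:\exists g_n\to\infty,\ \alpha(g_n)(\omega)\to\nu\}$. $S^{N-1}=\{\eta\in\mathbb R^N:|\eta|=1\}$. For $R>0$ and an open neighbourhood $U\subseteq S^{N-1}$ of $\eta$, $W_{R,U}:=\{k\in\mathbb Z^N:|k|>R,\ k/|k|\in U\}$. A sequence $(g_n)$ in $\mathbb Z^N$ with $g_n\to\infty$ tends to infinity in direction $\eta$ if for every such $W_{R,U}$ there is $n_0$ with $g_n\in W_{R,U}$ for all $n\ge n_0$. $L^\eta(\omega)=\{\nu\in\Omega:\exists (g_n)$ tending to infinity in direction $\eta$ with $\alpha(g_n)(\omega)\to\nu\}$. *)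

theory Defs
  imports "HOL-Analysis.Analysis"
begin

text \<open>A dynamical system (Omega, Z^N, alpha): Omega a compact subset of a metric space
  (the compact metric space), lattice points of Z^N as int^'n, each alpha g a homeomorphism
  of Omega, and alpha (g+h) = alpha g o alpha h on Omega.\<close>
definition dyn_system :: "'a::metric_space set \<Rightarrow> (int^'n \<Rightarrow> 'a \<Rightarrow> 'a) \<Rightarrow> bool" where
  "dyn_system \<Omega> \<alpha> \<longleftrightarrow> compact \<Omega> \<and>
     (\<forall>g. \<exists>h. homeomorphism \<Omega> \<Omega> (\<alpha> g) h) \<and>
     (\<forall>g h. \<forall>x\<in>\<Omega>. \<alpha> (g + h) x = \<alpha> g (\<alpha> h x))"

definition lat_real :: "int^'n \<Rightarrow> real^'n" where
  "lat_real k = (\<chi> i. real_of_int (k $ i))"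

definition tends_infty :: "(nat \<Rightarrow> int^'n) \<Rightarrow> bool" where
  "tends_infty g \<longleftrightarrow> (\<forall>F. finite F \<longrightarrow> eventually (\<lambda>n. g n \<notin> F) sequentially)"

definition W_set :: "real \<Rightarrow> (real^'n) set \<Rightarrow> (int^'n) set" where
  "W_set R U = {k. norm (lat_real k) > R \<and> lat_real k /\<^sub>R norm (lat_real k) \<in> U}"

definition tends_infty_dir :: "(nat \<Rightarrow> int^'n) \<Rightarrow> real^'n \<Rightarrow> bool" where
  "tends_infty_dir g \<eta> \<longleftrightarrow> tends_infty g \<and>
     (\<forall>R U. R > 0 \<and> openin (top_of_set (sphere 0 1)) U \<and> \<eta> \<in> U \<longrightarrow>
        eventually (\<lambda>n. g n \<in> W_set R U) sequentially)"

definition limit_set :: "'a::metric_space set \<Rightarrow> (int^'n \<Rightarrow> 'a \<Rightarrow> 'a) \<Rightarrow> 'a \<Rightarrow> 'a set" where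
  "limit_set \<Omega> \<alpha> \<omega> = {\<nu> \<in> \<Omega>. \<exists>g. tends_infty g \<and> (\<lambda>n. \<alpha> (g n) \<omega>) \<longlonglongrightarrow> \<nu>}"

definition dir_limit_set :: "'a::metric_space set \<Rightarrow> (int^'n \<Rightarrow> 'a \<Rightarrow> 'a) \<Rightarrow> real^'n \<Rightarrow> 'a \<Rightarrow> 'a set" where
  "dir_limit_set \<Omega> \<alpha> \<eta> \<omega> = {\<nu> \<in> \<Omega>. \<exists>g. tends_infty_dir g \<eta> \<and> (\<lambda>n. \<alpha> (g n) \<omega>) \<longlonglongrightarrow> \<nu>}"

end

theory Submission
  imports Defs
begin

text \<open>Only finitely many lattice points lie in a ball, so a sequence tending to infinity has
  norms tending to infinity; its normalised directions lie in the compact unit sphere and thus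
  have a convergent subsequence, along which the sequence tends to infinity in the limit
  direction.\<close>

lemma finite_lat_real_norm_le: "finite {k::int^'n. norm (lat_real k) \<le> R}"
proof -
  define S where "S = {-\<lceil>R\<rceil>..\<lceil>R\<rceil>}"
  have "vec_nth ` {k::int^'n. norm (lat_real k) \<le> R} \<subseteq> PiE UNIV (\<lambda>_. S)"
  proof
    fix f assume "f \<in> vec_nth ` {k::int^'n. norm (lat_real k) \<le> R}"
    then obtain k where k: "norm (lat_real k) \<le> R" "f = vec_nth k" by auto
    have "k $ i \<in> S" for i
    proof -
      have "\<bar>real_of_int (k $ i)\<bar> \<le> R"
        using k component_le_norm_cart[of "lat_real k" i] by (simp add: lat_real_def)
      then have "\<bar>k $ i\<bar> \<le> \<lceil>R\<rceil>"
        by (metis ceiling_mono ceiling_of_int of_int_abs)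
      then show "k $ i \<in> S" by (auto simp: S_def)
    qed
    then show "f \<in> PiE UNIV (\<lambda>_. S)" using k by auto
  qed
  moreover have "finite (PiE (UNIV::'n set) (\<lambda>_. S))"
    by (rule finite_PiE) (auto simp: S_def)
  ultimately have "finite (vec_nth ` {k::int^'n. norm (lat_real k) \<le> R})"
    using finite_subset by blast
  then show ?thesis by (rule finite_imageD) (simp add: inj_on_def vec_eq_iff)
qed

lemma tends_infty_imp_norm_gt:
  fixes g :: "nat \<Rightarrow> int^'n"
  assumes "tends_infty g"
  shows "eventually (\<lambda>n. norm (lat_real (g n)) > R) sequentially"
proof -
  have "eventually (\<lambda>n. g n \<notin> {k. norm (lat_real k) \<le> R}) sequentially"
    using assms finite_lat_real_norm_le unfolding tends_infty_def by blast
  then show ?thesis by (rule eventually_mono) auto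
qed

lemma tends_infty_subseq:
  fixes g :: "nat \<Rightarrow> int^'n"
  assumes "tends_infty g" and "strict_mono r"
  shows "tends_infty (g \<circ> r)"
  unfolding tends_infty_def
proof (intro allI impI)
  fix F :: "(int^'n) set" assume "finite F"
  then have "eventually (\<lambda>n. g n \<notin> F) sequentially"
    using assms(1) unfolding tends_infty_def by blast
  then show "eventually (\<lambda>n. (g \<circ> r) n \<notin> F) sequentially"
    using eventually_compose_filterlim[OF _ filterlim_subseq[OF assms(2)]] by (simp add: comp_def)
qed

lemma tends_infty_dir_if_directions_tendsto:
  fixes g :: "nat \<Rightarrow> int^'n"
  assumes g: "tends_infty g"
    and dir: "(\<lambda>n. lat_real (g n) /\<^sub>R norm (lat_real (g n))) \<longlonglongrightarrow> \<eta>"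
  shows "tends_infty_dir g \<eta>"
  unfolding tends_infty_dir_def
proof (intro conjI g allI impI)
  fix R :: real and U :: "(real^'n) set"
  assume "R > 0 \<and> openin (top_of_set (sphere 0 1)) U \<and> \<eta> \<in> U"
  then obtain V where R: "R > 0" and V: "open V" "U = sphere 0 1 \<inter> V" "\<eta> \<in> V"
    by (auto simp: openin_open)
  have "eventually (\<lambda>n. lat_real (g n) /\<^sub>R norm (lat_real (g n)) \<in> V) sequentially"
    using dir V by (auto simp: tendsto_def)
  with tends_infty_imp_norm_gt[OF g, of R]
  show "eventually (\<lambda>n. g n \<in> W_set R U) sequentially"
  proof eventually_elim
    case (elim n)
    then have "norm (lat_real (g n)) \<noteq> 0" using R by linarith
    with elim show ?case using V by (simp add: W_set_def)
  qed
qed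

lemma tends_infty_has_dir_subseq:
  fixes g :: "nat \<Rightarrow> int^'n"
  assumes g: "tends_infty g"
  obtains \<eta> r where "\<eta> \<in> sphere 0 1" "strict_mono r" "tends_infty_dir (g \<circ> r) \<eta>"
proof -
  define d where "d n = lat_real (g n) /\<^sub>R norm (lat_real (g n))" for n
  have "d n \<in> cball 0 1" for n
    by (cases "lat_real (g n) = 0") (simp_all add: d_def)
  then obtain \<eta> r where r: "strict_mono r" and lim: "(d \<circ> r) \<longlonglongrightarrow> \<eta>"
    using compact_imp_seq_compact[OF compact_cball[of "0::real^'n" 1]]
    unfolding seq_compact_def by blast
  have gr: "tends_infty (g \<circ> r)" using tends_infty_subseq[OF g r] .
  have "eventually (\<lambda>n. (d \<circ> r) n \<in> sphere 0 1) sequentially"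
    using tends_infty_imp_norm_gt[OF gr, of 0] by eventually_elim (simp add: d_def)
  then have "\<eta> \<in> sphere 0 1"
    by (rule Lim_in_closed_set[OF closed_sphere _ sequentially_bot lim])
  moreover have "tends_infty_dir (g \<circ> r) \<eta>"
    using tends_infty_dir_if_directions_tendsto[OF gr] lim by (simp add: d_def comp_def)
  ultimately show ?thesis using r that by blast
qed

theorem lemma6p2:
  fixes \<Omega> :: "'a::metric_space set" and \<alpha> :: "int^'n \<Rightarrow> 'a \<Rightarrow> 'a" and \<omega> :: 'a
  assumes "dyn_system \<Omega> \<alpha>" and "\<omega> \<in> \<Omega>"
  shows "limit_set \<Omega> \<alpha> \<omega> = (\<Union>\<eta>\<in>sphere 0 1. dir_limit_set \<Omega> \<alpha> \<eta> \<omega>)"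
proof
  show "(\<Union>\<eta>\<in>sphere 0 1. dir_limit_set \<Omega> \<alpha> \<eta> \<omega>) \<subseteq> limit_set \<Omega> \<alpha> \<omega>"
    unfolding limit_set_def dir_limit_set_def tends_infty_dir_def by blast
next
  show "limit_set \<Omega> \<alpha> \<omega> \<subseteq> (\<Union>\<eta>\<in>sphere 0 1. dir_limit_set \<Omega> \<alpha> \<eta> \<omega>)"
  proof
    fix \<nu> assume "\<nu> \<in> limit_set \<Omega> \<alpha> \<omega>"
    then obtain g where \<nu>: "\<nu> \<in> \<Omega>" and g: "tends_infty g"
      and lim: "(\<lambda>n. \<alpha> (g n) \<omega>) \<longlonglongrightarrow> \<nu>"
      unfolding limit_set_def by blast
    obtain \<eta> r where "\<eta> \<in> sphere 0 1" "strict_mono r" "tends_infty_dir (g \<circ> r) \<eta>"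
      using tends_infty_has_dir_subseq[OF g] .
    moreover from \<open>strict_mono r\<close> have "(\<lambda>n. \<alpha> ((g \<circ> r) n) \<omega>) \<longlonglongrightarrow> \<nu>"
      using LIMSEQ_subseq_LIMSEQ[OF lim] by (simp add: comp_def)
    ultimately show "\<nu> \<in> (\<Union>\<eta>\<in>sphere 0 1. dir_limit_set \<Omega> \<alpha> \<eta> \<omega>)"
      using \<nu> unfolding dir_limit_set_def by blast
  qed
qed

end
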